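(* For $\rho\in(0,1)$ and $\alpha\in\{1/2,1\}$, \[ \mathbf M(\Lambda;\rho,\rho,\alpha)=\rho(2-\rho)+(1-\rho)\Bigl[\rho\Lambda^2+\alpha(1-\rho)\bigl(Q_2(\Lambda)-2\Lambda Q_1(\Lambda)+\Lambda^2Q_0(\Lambda)\bigr)\Bigr], \] where, for $0\le x\le 2$, \[ Q_0(x)=\frac1\pi\int_x^2\sqrt{4-t^2}\,dt=1-\frac{x}{2\pi}\sqrt{4-x^2}-\frac2\pi\arctan\Bigl(\frac{x}{\sqrt{4-x^2}}\Bigr), \] \[ Q_1(x)=\frac1\pi\int_x^2t\sqrt{4-t^2}\,dt=\frac{1}{3\pi}(4-x^2)^{3/2}, \] \[ Q_2(x)=\frac1\pi\int_x^2t^2\sqrt{4-t^2}\,dt=1-\frac{1}{4\pi}x\sqrt{4-x^2}(x^2-2)-\frac2\pi\arcsin\Bigl(\frac x2\Bigr). \] Moreover, the minimizer over $\Lambda$ of $\mathbf M(\Lambda;\rho,\rho,\alpha)$ equals $2\sin(\theta_\alpha(\rho))$, where $\theta_\alpha(\rho)\in[0,\pi/2]$ is the unique solution of \[ \theta+\cot(\theta)\Bigl(1-\tfrac13\cos^2\theta\Bigr)=\frac{\pi(1+\alpha^{-1}\rho-\rho)}{2(1-\rho)}, \] and the left-hand side of this equation is a decreasing function of $\theta$.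
   Context: For $\gamma>0$, $\gamma_\pm=(1\pm\sqrt\gamma)^2$, the Marčenko–Pastur density is $p_\gamma(t)=\frac{1}{2\pi\gamma t}\sqrt{(\gamma_+-t)(t-\gamma_-)}\mathbf 1_{[\gamma_-,\gamma_+]}(t)$ and $P_\gamma(x;k)=\int_x^{\gamma_+}t^kp_\gamma(t)\,dt$. For $\alpha\in\{1/2,1\}$, \[ \mathbf M(\Lambda;\rho,\tilde\rho,\alpha)=\rho+\tilde\rho-\rho\tilde\rho+(1-\tilde\rho)\Bigl[\rho\Lambda^2+\alpha(1-\rho)\bigl(P_\gamma(\Lambda^2;1)-2\Lambda P_\gamma(\Lambda^2;\tfrac12)+\Lambda^2P_\gamma(\Lambda^2;0)\bigr)\Bigr], \] with $\gamma=(\tilde\rho-\rho\tilde\rho)/(\rho-\rho\tilde\rho)$; here $\tilde\rho=\rho$ (square case), so $\gamma=1$. *)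

theory Defs
  imports "HOL-Analysis.Analysis"
begin

definition gamma_plus :: "real \<Rightarrow> real" where
  "gamma_plus \<gamma> = (1 + sqrt \<gamma>)\<^sup>2"

definition gamma_minus :: "real \<Rightarrow> real" where
  "gamma_minus \<gamma> = (1 - sqrt \<gamma>)\<^sup>2"

definition mp_density :: "real \<Rightarrow> real \<Rightarrow> real" where
  "mp_density \<gamma> t =
     (1 / (2 * pi * \<gamma> * t)) * sqrt ((gamma_plus \<gamma> - t) * (t - gamma_minus \<gamma>))
       * indicator {gamma_minus \<gamma>..gamma_plus \<gamma>} t"

definition mp_P :: "real \<Rightarrow> real \<Rightarrow> real \<Rightarrow> real" where
  "mp_P \<gamma> x k = integral {x..gamma_plus \<gamma>} (\<lambda>t. t powr k * mp_density \<gamma> t)"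

definition M_risk :: "real \<Rightarrow> real \<Rightarrow> real \<Rightarrow> real \<Rightarrow> real" where
  "M_risk \<Lambda> \<rho> \<rho>t \<alpha> =
     (let \<gamma> = (\<rho>t - \<rho> * \<rho>t) / (\<rho> - \<rho> * \<rho>t) in
      \<rho> + \<rho>t - \<rho> * \<rho>t + (1 - \<rho>t) *
        (\<rho> * \<Lambda>\<^sup>2 + \<alpha> * (1 - \<rho>) *
          (mp_P \<gamma> (\<Lambda>\<^sup>2) 1 - 2 * \<Lambda> * mp_P \<gamma> (\<Lambda>\<^sup>2) (1/2)
           + \<Lambda>\<^sup>2 * mp_P \<gamma> (\<Lambda>\<^sup>2) 0)))"

definition Q0 :: "real \<Rightarrow> real" where
  "Q0 x = (1 / pi) * integral {x..2} (\<lambda>t. sqrt (4 - t\<^sup>2))"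

definition Q1 :: "real \<Rightarrow> real" where
  "Q1 x = (1 / pi) * integral {x..2} (\<lambda>t. t * sqrt (4 - t\<^sup>2))"

definition Q2 :: "real \<Rightarrow> real" where
  "Q2 x = (1 / pi) * integral {x..2} (\<lambda>t. t\<^sup>2 * sqrt (4 - t\<^sup>2))"

end

(*
  For gamma = 1 the Marchenko--Pastur law lives on [0, 4] with density sqrt ((4 - t) t) / (2 pi t),
  and the substitution t = s^2 turns P_1(Lambda^2; k) into the quarter-circle moment
  (1/pi) * integral of s^(2k) sqrt (4 - s^2) over [|Lambda|, 2], i.e. into Q_0, Q_1, Q_2 at |Lambda|.
  Primitives of the form p(s) sqrt (4 - s^2) + c arcsin (s/2), with p a polynomial, give the
  closed forms.

  Up to the affine factor, M is G(L) = rho L^2 + c (Q_2 - 2 L Q_1 + L^2 Q_0) with c = alpha (1 - rho).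
  On [0, 2] one has G' = 2 rho L + 2 c (L Q_0 - Q_1) and G'' = 2 rho + 2 c Q_0 > 0, so a critical
  point there is the strict minimiser on [0, 2]; for L > 2, G(L) = rho L^2 > G(2), and for
  L > 0, G(-L) = G(L) + 4 c L Q_1(L).  At L = 2 sin theta we have sqrt (4 - L^2) = 2 cos theta
  and arcsin (L/2) = theta, and G'(L) = 0 becomes the angle equation, whose left-hand side
  has derivative -(2/3) cos^4 theta / sin^2 theta < 0.
*)

theory Submission
  imports Defs
begin

section \<open>Quarter-circle moments\<close>

definition quarter_circle_moment :: "nat \<Rightarrow> real \<Rightarrow> real" where
  "quarter_circle_moment n x = (1 / pi) * integral {x..2} (\<lambda>t. t ^ n * sqrt (4 - t\<^sup>2))"

lemma Q_eq_quarter_circle_moment: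
  "Q0 = quarter_circle_moment 0" "Q1 = quarter_circle_moment 1" "Q2 = quarter_circle_moment 2"
  by (simp_all add: fun_eq_iff Q0_def Q1_def Q2_def quarter_circle_moment_def)

lemma continuous_on_quarter_circle_moment: "continuous_on {a..2} (quarter_circle_moment n)"
  unfolding quarter_circle_moment_def
  by (intro continuous_intros indefinite_integral_continuous_1' integrable_continuous_real)

lemma quarter_circle_moment_has_derivative:
  assumes "x < 2"
  shows "(quarter_circle_moment n has_real_derivative - (x ^ n * sqrt (4 - x\<^sup>2)) / pi) (at x)"
proof -
  have "((\<lambda>x. integral {x..2} (\<lambda>t. t ^ n * sqrt (4 - t\<^sup>2))) has_real_derivative
          - (x ^ n * sqrt (4 - x\<^sup>2))) (at x within {x - 1..2})"
    using assms by (intro integral_has_real_derivative' continuous_intros) auto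
  then have "((\<lambda>x. integral {x..2} (\<lambda>t. t ^ n * sqrt (4 - t\<^sup>2))) has_real_derivative
          - (x ^ n * sqrt (4 - x\<^sup>2))) (at x)"
    using assms by (simp add: at_within_Icc_at)
  then show ?thesis
    unfolding quarter_circle_moment_def[abs_def] by (auto intro!: derivative_eq_intros)
qed

lemma quarter_circle_moment_beyond_support: "2 \<le> x \<Longrightarrow> quarter_circle_moment n x = 0"
  by (cases "x = 2") (simp_all add: quarter_circle_moment_def)

lemma quarter_circle_moment_eq_primitive:
  assumes "x \<le> 2" and "continuous_on {x..2} A"
    and "\<And>t. x < t \<Longrightarrow> t < 2 \<Longrightarrow> (A has_real_derivative t ^ n * sqrt (4 - t\<^sup>2)) (at t)"
  shows "quarter_circle_moment n x = (A 2 - A x) / pi"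
proof -
  have "((\<lambda>t. t ^ n * sqrt (4 - t\<^sup>2)) has_integral A 2 - A x) {x..2}"
    using assms by (intro fundamental_theorem_of_calculus_interior)
      (auto simp: has_real_derivative_iff_has_vector_derivative)
  then show ?thesis
    by (simp add: quarter_circle_moment_def integral_unique)
qed

lemma four_minus_sq_pos: "\<bar>t\<bar> < 2 \<Longrightarrow> (0::real) < 4 - t\<^sup>2"
  using abs_square_less_1[of "t / 2"] by (simp add: power_divide)

lemma has_real_derivative_sqrt_four_minus_sq:
  assumes "\<bar>t\<bar> < 2"
  shows "((\<lambda>t. sqrt (4 - t\<^sup>2)) has_real_derivative - t / sqrt (4 - t\<^sup>2)) (at t)"
  using four_minus_sq_pos[OF assms]
  by (auto intro!: derivative_eq_intros simp: field_simps)

lemma sqrt_one_minus_half_sq: "sqrt (1 - (t / 2)\<^sup>2) = sqrt (4 - t\<^sup>2) / 2"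
proof -
  have "sqrt (1 - (t / 2)\<^sup>2) = sqrt ((4 - t\<^sup>2) / 4)"
    by (rule arg_cong[where f = sqrt]) (simp add: power_divide field_simps)
  also have "\<dots> = sqrt (4 - t\<^sup>2) / 2"
    by (simp add: real_sqrt_divide)
  finally show ?thesis .
qed

lemma has_real_derivative_arcsin_half:
  assumes "\<bar>t\<bar> < 2"
  shows "((\<lambda>t. arcsin (t / 2)) has_real_derivative 1 / sqrt (4 - t\<^sup>2)) (at t)"
proof -
  have "-1 < t / 2" "t / 2 < 1" "((\<lambda>t. t / 2) has_real_derivative 1 / 2) (at t)"
    using assms by (auto intro!: derivative_eq_intros)
  from DERIV_chain2[OF DERIV_arcsin[OF this(1,2)] this(3)] show ?thesis
    unfolding sqrt_one_minus_half_sq by simp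
qed

lemma has_real_derivative_quarter_circle_primitive:
  assumes P: "(P has_real_derivative P') (at t)" and t: "\<bar>t\<bar> < 2"
  shows "((\<lambda>t. P t * sqrt (4 - t\<^sup>2) + c * arcsin (t / 2)) has_real_derivative
           (P' * (4 - t\<^sup>2) - t * P t + c) / sqrt (4 - t\<^sup>2)) (at t)"
proof -
  have "((\<lambda>t. P t * sqrt (4 - t\<^sup>2) + c * arcsin (t / 2)) has_real_derivative
           P' * sqrt (4 - t\<^sup>2) + - t / sqrt (4 - t\<^sup>2) * P t + c * (1 / sqrt (4 - t\<^sup>2))) (at t)"
    by (intro DERIV_add DERIV_mult DERIV_cmult P
        has_real_derivative_sqrt_four_minus_sq[OF t] has_real_derivative_arcsin_half[OF t])
  moreover have "P' * s + - t / s * P t + c * (1 / s) = (P' * (s * s) - t * P t + c) / s" if "0 < s" for s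
    using that by (simp add: field_simps)
  moreover have "0 < sqrt (4 - t\<^sup>2)" "sqrt (4 - t\<^sup>2) * sqrt (4 - t\<^sup>2) = 4 - t\<^sup>2"
    using four_minus_sq_pos[OF t] by simp_all
  ultimately show ?thesis
    by (simp only:)
qed

lemma quarter_circle_moment_closed_form:
  assumes x: "\<bar>x\<bar> \<le> 2"
    and P: "\<And>t. (P has_real_derivative P' t) (at t)"
    and PP': "\<And>t. P' t * (4 - t\<^sup>2) - t * P t + c = t ^ n * (4 - t\<^sup>2)"
  shows "quarter_circle_moment n x = c / 2 - (P x * sqrt (4 - x\<^sup>2) + c * arcsin (x / 2)) / pi"
proof -
  let ?A = "\<lambda>t. P t * sqrt (4 - t\<^sup>2) + c * arcsin (t / 2)"
  have "quarter_circle_moment n x = (?A 2 - ?A x) / pi"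
  proof (rule quarter_circle_moment_eq_primitive)
    have "continuous_on {x..2} P"
      using P by (meson DERIV_isCont continuous_at_imp_continuous_on)
    then show "continuous_on {x..2} ?A"
      using x by (intro continuous_intros) auto
    fix t assume "x < t" "t < 2"
    then have t: "\<bar>t\<bar> < 2" and "0 < 4 - t\<^sup>2"
      using x four_minus_sq_pos by auto
    then have "t ^ n * (4 - t\<^sup>2) / sqrt (4 - t\<^sup>2) = t ^ n * sqrt (4 - t\<^sup>2)"
      by (simp add: real_div_sqrt flip: times_divide_eq_right)
    then show "(?A has_real_derivative t ^ n * sqrt (4 - t\<^sup>2)) (at t)"
      using has_real_derivative_quarter_circle_primitive[OF P t, of c] by (simp only: PP')
  qed (use x in simp)
  then show ?thesis
    by (simp add: field_simps)
qed

lemma Q0_arcsin: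
  assumes "\<bar>x\<bar> \<le> 2"
  shows "Q0 x = 1 - x / (2 * pi) * sqrt (4 - x\<^sup>2) - 2 / pi * arcsin (x / 2)"
proof -
  have "Q0 x = 2 / 2 - (x / 2 * sqrt (4 - x\<^sup>2) + 2 * arcsin (x / 2)) / pi"
    unfolding Q_eq_quarter_circle_moment
    by (rule quarter_circle_moment_closed_form[OF assms, where P = "\<lambda>t. t / 2" and P' = "\<lambda>_. 1 / 2"])
      (auto intro!: derivative_eq_intros simp: field_simps power2_eq_square)
  then show ?thesis
    unfolding \<open>Q0 x = _\<close> by (simp add: field_simps)
qed

lemma Q0_arctan:
  assumes "\<bar>x\<bar> < 2"
  shows "Q0 x = 1 - x / (2 * pi) * sqrt (4 - x\<^sup>2) - 2 / pi * arctan (x / sqrt (4 - x\<^sup>2))"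
proof -
  have "arcsin (x / 2) = arctan ((x / 2) / sqrt (1 - (x / 2)\<^sup>2))"
    using assms by (intro arcsin_arctan) auto
  also have "\<dots> = arctan (x / sqrt (4 - x\<^sup>2))"
    unfolding sqrt_one_minus_half_sq by simp
  finally show ?thesis
    using assms by (simp add: Q0_arcsin)
qed

lemma Q1_sqrt:
  assumes "\<bar>x\<bar> \<le> 2"
  shows "Q1 x = (4 - x\<^sup>2) * sqrt (4 - x\<^sup>2) / (3 * pi)"
proof -
  have "Q1 x = 0 / 2 - (- (4 - x\<^sup>2) / 3 * sqrt (4 - x\<^sup>2) + 0 * arcsin (x / 2)) / pi"
    unfolding Q_eq_quarter_circle_moment
    by (rule quarter_circle_moment_closed_form[OF assms,
          where P = "\<lambda>t. - (4 - t\<^sup>2) / 3" and P' = "\<lambda>t. 2 * t / 3"])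
      (auto intro!: derivative_eq_intros simp: field_simps power2_eq_square)
  then show ?thesis
    unfolding \<open>Q1 x = _\<close> by (simp add: field_simps)
qed

lemma Q1_closed_form:
  assumes "\<bar>x\<bar> \<le> 2"
  shows "Q1 x = 1 / (3 * pi) * (4 - x\<^sup>2) powr (3/2)"
proof -
  have "0 \<le> 4 - x\<^sup>2"
    using assms abs_le_square_iff[of x 2] by simp
  then have "(4 - x\<^sup>2) powr (3/2) = (4 - x\<^sup>2) * sqrt (4 - x\<^sup>2)"
    by (simp add: powr_add[of _ 1 "1/2", simplified] powr_half_sqrt)
  then show ?thesis
    using Q1_sqrt[OF assms] by simp
qed

lemma Q2_closed_form:
  assumes "\<bar>x\<bar> \<le> 2"
  shows "Q2 x = 1 - 1 / (4 * pi) * x * sqrt (4 - x\<^sup>2) * (x\<^sup>2 - 2) - 2 / pi * arcsin (x / 2)"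
proof -
  have "Q2 x = 2 / 2 - (x * (x\<^sup>2 - 2) / 4 * sqrt (4 - x\<^sup>2) + 2 * arcsin (x / 2)) / pi"
    unfolding Q_eq_quarter_circle_moment
    by (rule quarter_circle_moment_closed_form[OF assms,
          where P = "\<lambda>t. t * (t\<^sup>2 - 2) / 4" and P' = "\<lambda>t. (3 * t\<^sup>2 - 2) / 4"])
      (auto intro!: derivative_eq_intros simp: field_simps power2_eq_square)
  then show ?thesis
    unfolding \<open>Q2 x = _\<close> by (simp add: field_simps)
qed

lemma Q0_nonneg: "0 \<le> x \<Longrightarrow> 0 \<le> Q0 x"
  unfolding Q0_def
  by (intro mult_nonneg_nonneg integral_nonneg integrable_continuous_interval continuous_intros)
    (auto intro: power_mono[of _ 2 2, simplified])

lemma Q1_nonneg: "0 \<le> x \<Longrightarrow> 0 \<le> Q1 x"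
  unfolding Q1_def
  by (intro mult_nonneg_nonneg integral_nonneg integrable_continuous_interval continuous_intros)
    (auto intro: power_mono[of _ 2 2, simplified])

lemma Q1_pos: "\<bar>x\<bar> < 2 \<Longrightarrow> 0 < Q1 x"
  using four_minus_sq_pos[of x] by (simp add: Q1_sqrt)

section \<open>The Marchenko--Pastur integrals for \<open>\<gamma> = 1\<close>\<close>

lemma mp_density_one:
  assumes "0 < t" "t < 4"
  shows "mp_density 1 t = sqrt (4 - t) / (2 * pi * sqrt t)"
proof -
  have "sqrt ((4 - t) * t) / (2 * pi * t) = sqrt (4 - t) * sqrt t / (2 * pi * (sqrt t * sqrt t))"
    using assms by (simp add: real_sqrt_mult)
  also have "\<dots> = sqrt (4 - t) / (2 * pi * sqrt t)"
    using assms by (simp only: mult.assoc[symmetric] nonzero_mult_divide_mult_cancel_right) simp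
  finally have "sqrt ((4 - t) * t) / (2 * pi * t) = sqrt (4 - t) / (2 * pi * sqrt t)" .
  then show ?thesis
    using assms by (simp add: mp_density_def gamma_plus_def gamma_minus_def)
qed

lemma mp_P_one_eq_quarter_circle_moment:
  assumes "0 \<le> x"
  shows "mp_P 1 x (n / 2) = quarter_circle_moment n (sqrt x)"
proof (cases "x \<le> 4")
  case True
  let ?F = "\<lambda>t. - quarter_circle_moment n (sqrt t)"
  have "((\<lambda>t. t powr (n / 2) * mp_density 1 t) has_integral ?F 4 - ?F x) {x..4}"
  proof (rule fundamental_theorem_of_calculus_interior)
    have "continuous_on {x..4} (quarter_circle_moment n \<circ> sqrt)"
      by (intro continuous_on_compose continuous_intros
          continuous_on_subset[OF continuous_on_quarter_circle_moment[of 0]])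
        (use \<open>0 \<le> x\<close> real_sqrt_le_mono[of _ 4] in auto)
    then show "continuous_on {x..4} ?F"
      by (auto simp: o_def intro!: continuous_intros)
  next
    fix t assume t: "t \<in> {x<..<4}"
    then have "0 < t" "sqrt t < 2"
      using \<open>0 \<le> x\<close> real_sqrt_less_mono[of t 4] by auto
    then have "(?F has_real_derivative - (- (sqrt t ^ n * sqrt (4 - t)) / pi * (inverse (sqrt t) / 2))) (at t)"
      using DERIV_chain2[OF quarter_circle_moment_has_derivative[of "sqrt t" n] DERIV_real_sqrt[of t]]
      by (intro DERIV_minus) simp
    moreover have "t powr (n / 2) = sqrt t ^ n"
      using \<open>0 < t\<close> by (simp add: powr_half_sqrt[symmetric] powr_realpow[symmetric] powr_powr)
    then have "- (- (sqrt t ^ n * sqrt (4 - t)) / pi * (inverse (sqrt t) / 2)) = t powr (n / 2) * mp_density 1 t"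
      using t \<open>0 < t\<close> by (simp add: mp_density_one field_simps)
    ultimately show "(?F has_vector_derivative t powr (n / 2) * mp_density 1 t) (at t)"
      by (simp add: has_real_derivative_iff_has_vector_derivative)
  qed (use True in simp)
  then show ?thesis
    by (simp add: mp_P_def gamma_plus_def integral_unique quarter_circle_moment_beyond_support)
next
  case False
  then show ?thesis
    using real_sqrt_less_mono[of 4 x] by (simp add: mp_P_def gamma_plus_def quarter_circle_moment_beyond_support)
qed

lemma mp_P_one_sq:
  "mp_P 1 (y\<^sup>2) 0 = Q0 \<bar>y\<bar>" "mp_P 1 (y\<^sup>2) (1/2) = Q1 \<bar>y\<bar>" "mp_P 1 (y\<^sup>2) 1 = Q2 \<bar>y\<bar>"
  using mp_P_one_eq_quarter_circle_moment[of "y\<^sup>2" 0] mp_P_one_eq_quarter_circle_moment[of "y\<^sup>2" 1]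
    mp_P_one_eq_quarter_circle_moment[of "y\<^sup>2" 2]
  by (simp_all add: Q_eq_quarter_circle_moment)

definition risk_profile :: "real \<Rightarrow> real \<Rightarrow> real \<Rightarrow> real" where
  "risk_profile r c L = r * L\<^sup>2 + c * (Q2 \<bar>L\<bar> - 2 * L * Q1 \<bar>L\<bar> + L\<^sup>2 * Q0 \<bar>L\<bar>)"

lemma M_risk_square_eq:
  assumes "0 < \<rho>" "\<rho> < 1"
  shows "M_risk L \<rho> \<rho> \<alpha> = \<rho> * (2 - \<rho>) + (1 - \<rho>) * risk_profile \<rho> (\<alpha> * (1 - \<rho>)) L"
proof -
  have "\<rho> * \<rho> < \<rho> * 1"
    using assms by (intro mult_strict_left_mono) auto
  then have "(\<rho> - \<rho> * \<rho>) / (\<rho> - \<rho> * \<rho>) = 1" \<comment> \<open>\<open>\<gamma> = 1\<close>\<close>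
    using assms by simp
  then show ?thesis
    by (simp add: M_risk_def risk_profile_def mp_P_one_sq algebra_simps)
qed

section \<open>Minimising the reduced risk\<close>

lemma strict_global_min_at_critical_point:
  fixes f f' :: "real \<Rightarrow> real"
  assumes cont: "continuous_on {a..b} f"
    and deriv: "\<And>x. a < x \<Longrightarrow> x < b \<Longrightarrow> (f has_real_derivative f' x) (at x)"
    and mono: "strict_mono_on {a<..<b} f'"
    and s: "a < s" "s < b" "f' s = 0"
    and x: "a \<le> x" "x \<le> b" "x \<noteq> s"
  shows "f s < f x"
proof (cases "x < s")
  case True
  show ?thesis
  proof (rule DERIV_neg_imp_decreasing_open[OF True])
    fix y assume "x < y" "y < s"
    then have "f' y < f' s"
      using s x by (intro strict_mono_onD[OF mono]) auto
    then show "\<exists>D. (f has_real_derivative D) (at y) \<and> D < 0"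
      using deriv[of y] \<open>x < y\<close> \<open>y < s\<close> s x by (intro exI[of _ "f' y"]) auto
  qed (use cont x s in \<open>auto intro: continuous_on_subset\<close>)
next
  case False
  then have "s < x"
    using x by simp
  show ?thesis
  proof (rule DERIV_pos_imp_increasing_open[OF \<open>s < x\<close>])
    fix y assume "s < y" "y < x"
    then have "f' s < f' y"
      using s x by (intro strict_mono_onD[OF mono]) auto
    then show "\<exists>D. (f has_real_derivative D) (at y) \<and> 0 < D"
      using deriv[of y] \<open>s < y\<close> \<open>y < x\<close> s x by (intro exI[of _ "f' y"]) auto
  qed (use cont x s in \<open>auto intro: continuous_on_subset\<close>)
qed

definition risk_slope :: "real \<Rightarrow> real \<Rightarrow> real \<Rightarrow> real" where
  "risk_slope r c L = 2 * r * L + 2 * c * (L * Q0 L - Q1 L)"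

lemma risk_profile_nonneg_eq:
  "0 \<le> L \<Longrightarrow> risk_profile r c L = r * L\<^sup>2 + c * (Q2 L - 2 * L * Q1 L + L\<^sup>2 * Q0 L)"
  by (simp add: risk_profile_def)

lemma risk_profile_has_derivative:
  assumes "0 < L" "L < 2"
  shows "(risk_profile r c has_real_derivative risk_slope r c L) (at L)"
proof (rule has_field_derivative_transform_within_open[where S = "{0<..}"])
  show "((\<lambda>L. r * L\<^sup>2 + c * (Q2 L - 2 * L * Q1 L + L\<^sup>2 * Q0 L)) has_real_derivative risk_slope r c L) (at L)"
    unfolding Q_eq_quarter_circle_moment risk_slope_def
    by (rule derivative_eq_intros quarter_circle_moment_has_derivative[OF \<open>L < 2\<close>] refl)+
      (simp add: algebra_simps power2_eq_square)
qed (use assms in \<open>auto simp: risk_profile_nonneg_eq\<close>)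

lemma risk_slope_has_derivative:
  assumes "L < 2"
  shows "(risk_slope r c has_real_derivative 2 * r + 2 * c * Q0 L) (at L)"
  unfolding Q_eq_quarter_circle_moment risk_slope_def[abs_def]
  by (rule derivative_eq_intros quarter_circle_moment_has_derivative[OF assms] refl)+
    (simp add: algebra_simps)

lemma continuous_on_risk_profile: "continuous_on {0..2} (risk_profile r c)"
proof (rule continuous_on_eq)
  show "continuous_on {0..2} (\<lambda>L. r * L\<^sup>2 + c * (Q2 L - 2 * L * Q1 L + L\<^sup>2 * Q0 L))"
    unfolding Q_eq_quarter_circle_moment
    by (intro continuous_intros continuous_on_quarter_circle_moment)
qed (simp add: risk_profile_nonneg_eq)

lemma strict_mono_on_risk_slope:
  assumes "0 < r" "0 \<le> c"
  shows "strict_mono_on {0<..<2} (risk_slope r c)"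
proof (rule strict_mono_onI)
  fix u v :: real assume "u \<in> {0<..<2}" "v \<in> {0<..<2}" "u < v"
  show "risk_slope r c u < risk_slope r c v"
  proof (rule DERIV_pos_imp_increasing_open[OF \<open>u < v\<close>])
    fix x assume "u < x" "x < v"
    then have "0 < 2 * r + 2 * c * Q0 x"
      using assms \<open>u \<in> _\<close> Q0_nonneg[of x] by (simp add: add_pos_nonneg)
    then show "\<exists>D. (risk_slope r c has_real_derivative D) (at x) \<and> 0 < D"
      using risk_slope_has_derivative[of x r c] \<open>x < v\<close> \<open>v \<in> _\<close>
      by (intro exI[of _ "2 * r + 2 * c * Q0 x"]) auto
  next
    show "continuous_on {u..v} (risk_slope r c)"
      using \<open>v \<in> _\<close>
      by (intro continuous_at_imp_continuous_on ballI DERIV_isCont[OF risk_slope_has_derivative]) auto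
  qed
qed

lemma risk_profile_reflect:
  "L \<le> 0 \<Longrightarrow> risk_profile r c L = risk_profile r c (- L) + 4 * c * (- L) * Q1 (- L)"
  by (simp add: risk_profile_def algebra_simps)

lemma risk_profile_beyond_support: "2 \<le> L \<Longrightarrow> risk_profile r c L = r * L\<^sup>2"
  by (simp add: risk_profile_def Q_eq_quarter_circle_moment quarter_circle_moment_beyond_support)

lemma risk_profile_strict_min:
  assumes r: "0 < r" and c: "0 < c" and s: "0 < s" "s < 2" "risk_slope r c s = 0"
    and "L \<noteq> s"
  shows "risk_profile r c s < risk_profile r c L"
proof -
  have nonneg: "risk_profile r c s < risk_profile r c L" if "0 \<le> L" "L \<noteq> s" for L
  proof (cases "L \<le> 2")
    case True
    show ?thesis
      using strict_global_min_at_critical_point[OF continuous_on_risk_profile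
          risk_profile_has_derivative strict_mono_on_risk_slope[OF r] s] that True c by auto
  next
    case False
    have "risk_profile r c s < risk_profile r c 2"
      using strict_global_min_at_critical_point[OF continuous_on_risk_profile
          risk_profile_has_derivative strict_mono_on_risk_slope[OF r] s] c s by auto
    also have "\<dots> < risk_profile r c L"
      using False r by (simp add: risk_profile_beyond_support power_strict_mono[of 2 L 2, simplified])
    finally show ?thesis .
  qed
  show ?thesis
  proof (cases "0 \<le> L")
    case False
    then have reflect: "risk_profile r c L = risk_profile r c (- L) + 4 * c * (- L) * Q1 (- L)"
      by (intro risk_profile_reflect) simp
    show ?thesis
    proof (cases "- L = s")
      case True
      then have "0 < 4 * c * (- L) * Q1 (- L)"
        using c s Q1_pos[of s] by (intro mult_pos_pos) auto
      then show ?thesis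
        using reflect True by simp
    next
      case False
      have "0 \<le> 4 * c * (- L) * Q1 (- L)"
        using c \<open>\<not> 0 \<le> L\<close> Q1_nonneg[of "- L"] by (intro mult_nonneg_nonneg) auto
      moreover have "risk_profile r c s < risk_profile r c (- L)"
        using nonneg[of "- L"] \<open>\<not> 0 \<le> L\<close> False by simp
      ultimately show ?thesis
        using reflect by linarith
    qed
  qed (use nonneg \<open>L \<noteq> s\<close> in simp)
qed

section \<open>The angle equation\<close>

definition theta_lhs :: "real \<Rightarrow> real" where
  "theta_lhs \<theta> = \<theta> + cot \<theta> * (1 - cos \<theta> ^ 2 / 3)"

lemma theta_lhs_has_derivative:
  assumes "sin \<theta> \<noteq> 0"
  shows "(theta_lhs has_real_derivative - (2/3) * cos \<theta> ^ 4 / sin \<theta> ^ 2) (at \<theta>)"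
proof -
  have "(theta_lhs has_real_derivative
          1 + (- inverse ((sin \<theta>)\<^sup>2) * (1 - cos \<theta> ^ 2 / 3) + (2 * cos \<theta> * sin \<theta> / 3) * cot \<theta>)) (at \<theta>)"
    unfolding theta_lhs_def[abs_def] using assms
    by (auto intro!: derivative_eq_intros DERIV_cot)
  moreover have "1 + (- inverse ((sin \<theta>)\<^sup>2) * (1 - cos \<theta> ^ 2 / 3) + (2 * cos \<theta> * sin \<theta> / 3) * cot \<theta>)
      = - (2/3) * cos \<theta> ^ 4 / sin \<theta> ^ 2"
    using assms by (simp add: cot_def field_simps) (insert sin_cos_squared_add[of \<theta>], algebra)
  ultimately show ?thesis
    by simp
qed

lemma continuous_on_theta_lhs:
  assumes "0 < a"
  shows "continuous_on {a..pi/2} theta_lhs"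
proof (intro continuous_at_imp_continuous_on ballI)
  fix x assume "x \<in> {a..pi/2}"
  then have "0 < sin x"
    using assms by (intro sin_gt_zero) auto
  then show "isCont theta_lhs x"
    by (intro DERIV_isCont[OF theta_lhs_has_derivative]) simp
qed

lemma strict_antimono_on_theta_lhs: "strict_antimono_on {0<..pi/2} theta_lhs"
proof (rule monotone_onI)
  fix a b assume "a \<in> {0<..pi/2}" "b \<in> {0<..pi/2}" "a < b"
  show "theta_lhs b < theta_lhs a"
  proof (rule DERIV_neg_imp_decreasing_open[OF \<open>a < b\<close>])
    fix x assume "a < x" "x < b"
    then have "0 < sin x" "0 < cos x"
      using \<open>a \<in> _\<close> \<open>b \<in> _\<close> by (auto intro!: sin_gt_zero cos_gt_zero_pi)
    then show "\<exists>D. (theta_lhs has_real_derivative D) (at x) \<and> D < 0"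
      using theta_lhs_has_derivative[of x] by force
  qed (use \<open>a \<in> _\<close> \<open>b \<in> _\<close> in \<open>auto intro: continuous_on_subset[OF continuous_on_theta_lhs]\<close>)
qed

text \<open>Because \<^term>\<open>cot 0 = 0\<close> (division by zero), \<^const>\<open>theta_lhs\<close> takes the junk
  value \<open>0\<close> at \<open>0\<close> instead of tending to \<open>+\<infinity>\<close>; it cannot solve the angle equation there,
  whose right-hand side exceeds \<open>\<pi>/2\<close>.\<close>

lemma theta_lhs_0: "theta_lhs 0 = 0"
  by (simp add: theta_lhs_def cot_def)

lemma theta_lhs_pi_half: "theta_lhs (pi/2) = pi/2"
  by (simp add: theta_lhs_def cot_def)

lemma theta_lhs_attains:
  assumes "pi/2 \<le> R"
  shows "\<exists>\<theta>\<in>{0<..pi/2}. theta_lhs \<theta> = R"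
proof -
  \<comment> \<open>\<open>cot \<theta>\<^sub>0 = 3 R / 2\<close> makes \<open>cot \<theta>\<^sub>0 (1 - cos\<^sup>2 \<theta>\<^sub>0 / 3) \<ge> R\<close>, so IVT applies on \<open>[\<theta>\<^sub>0, \<pi>/2]\<close>.\<close>
  define \<theta>\<^sub>0 where "\<theta>\<^sub>0 = arctan (2 / (3 * R))"
  have "0 < R"
    using assms pi_gt_zero by linarith
  then have "0 < \<theta>\<^sub>0" "\<theta>\<^sub>0 < pi/2"
    unfolding \<theta>\<^sub>0_def using arctan_ubound by (auto simp: zero_less_arctan_iff)
  then have "0 < sin \<theta>\<^sub>0" "0 < cos \<theta>\<^sub>0"
    by (auto intro!: sin_gt_zero cos_gt_zero_pi)
  then have cot: "cot \<theta>\<^sub>0 = 3 * R / 2"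
    using tan_arctan[of "2 / (3 * R)"] \<open>0 < R\<close> by (simp add: \<theta>\<^sub>0_def cot_def tan_def field_simps)
  moreover have "R * cos \<theta>\<^sub>0 ^ 2 \<le> R"
    using \<open>0 < R\<close> by (simp add: mult_left_le cos_squared_eq)
  ultimately have "R \<le> theta_lhs \<theta>\<^sub>0"
    using \<open>0 < \<theta>\<^sub>0\<close> by (simp add: theta_lhs_def cot algebra_simps)
  then obtain \<theta> where "\<theta>\<^sub>0 \<le> \<theta>" "\<theta> \<le> pi/2" "theta_lhs \<theta> = R"
    using IVT2'[of theta_lhs "pi/2" R \<theta>\<^sub>0] assms \<open>\<theta>\<^sub>0 < pi/2\<close> continuous_on_theta_lhs[OF \<open>0 < \<theta>\<^sub>0\<close>]
    by (auto simp: theta_lhs_pi_half)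
  then show ?thesis
    using \<open>0 < \<theta>\<^sub>0\<close> by auto
qed

lemma theta_lhs_solution_interior:
  assumes "\<theta> \<in> {0..pi/2}" "theta_lhs \<theta> = R" "pi/2 < R"
  shows "0 < \<theta> \<and> \<theta> < pi/2"
proof -
  have "\<theta> \<noteq> 0"
    using assms theta_lhs_0 pi_gt_zero by auto
  moreover have "\<theta> \<noteq> pi/2"
  proof
    assume "\<theta> = pi/2"
    then have "theta_lhs \<theta> = pi/2"
      by (simp only: theta_lhs_pi_half)
    then show False
      using assms by simp
  qed
  ultimately show ?thesis
    using assms(1) by auto
qed

lemma theta_lhs_unique_solution:
  assumes "pi/2 < R"
  shows "\<exists>!\<theta>. \<theta> \<in> {0..pi/2} \<and> theta_lhs \<theta> = R"
proof -
  obtain \<theta> where \<theta>: "\<theta> \<in> {0<..pi/2}" "theta_lhs \<theta> = R"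
    using theta_lhs_attains[OF less_imp_le[OF assms]] by blast
  have "\<eta> = \<theta>" if "\<eta> \<in> {0..pi/2}" "theta_lhs \<eta> = R" for \<eta>
  proof -
    have "\<eta> \<in> {0<..pi/2}"
      using theta_lhs_solution_interior[OF that assms] by simp
    then show ?thesis
      using strict_antimono_on_theta_lhs \<theta> that
      by (auto simp: strict_antimono_iff_antimono dest: inj_onD)
  qed
  with \<theta> show ?thesis
    by (intro ex1I[of _ \<theta>]) auto
qed

lemma risk_slope_two_sin:
  assumes c: "0 < c" and \<theta>: "0 < \<theta>" "\<theta> < pi/2"
    and eq: "theta_lhs \<theta> = pi/2 + pi * r / (2 * c)"
  shows "risk_slope r c (2 * sin \<theta>) = 0"
proof -
  define s co where "s = sin \<theta>" and "co = cos \<theta>"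
  have "0 < s" "0 < co" and pyth: "s\<^sup>2 + co\<^sup>2 = 1"
    using \<theta> by (auto simp: s_def co_def intro!: sin_gt_zero cos_gt_zero_pi)
  have "\<bar>2 * s\<bar> \<le> 2"
    using \<open>0 < s\<close> sin_le_one[of \<theta>] by (simp add: s_def)
  have "4 - (2 * s)\<^sup>2 = (2 * co)\<^sup>2"
    using pyth by (simp add: power_mult_distrib)
  then have "sqrt (4 - (2 * s)\<^sup>2) = 2 * co"
    using \<open>0 < co\<close> by (simp only: real_sqrt_abs)
  moreover have "arcsin (2 * s / 2) = \<theta>"
    using \<theta> by (simp add: s_def arcsin_sin)
  ultimately have Q0: "Q0 (2 * s) = 1 - 2 * s * co / pi - 2 * \<theta> / pi"
    and Q1: "Q1 (2 * s) = (2 * co)\<^sup>2 * (2 * co) / (3 * pi)"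
    using Q0_arcsin[OF \<open>\<bar>2 * s\<bar> \<le> 2\<close>] Q1_sqrt[OF \<open>\<bar>2 * s\<bar> \<le> 2\<close>] \<open>4 - (2 * s)\<^sup>2 = _\<close> by simp_all
  have \<theta>_eq: "\<theta> = pi/2 + pi * r / (2 * c) - co / s * (1 - co\<^sup>2 / 3)"
    using eq by (simp add: theta_lhs_def cot_def s_def co_def)
  have "risk_slope r c (2 * s) = 8 * c * co * (1 - (s\<^sup>2 + co\<^sup>2)) / pi"
    unfolding risk_slope_def Q0 Q1 using c \<open>0 < s\<close>
    by (subst \<theta>_eq) (simp add: field_simps power2_eq_square power3_eq_cube)
  then have "risk_slope r c (2 * s) = 0"
    by (simp only: pyth) simp
  then show ?thesis
    by (simp only: s_def)
qed

lemma theta_rhs_eq: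
  assumes "0 < \<alpha>" "\<rho> < 1"
  shows "pi * (1 + \<rho> / \<alpha> - \<rho>) / (2 * (1 - \<rho>)) = pi/2 + pi * \<rho> / (2 * (\<alpha> * (1 - \<rho>)))"
  using assms by (simp add: field_simps)

lemma M_risk_square_strict_min:
  assumes \<rho>: "0 < \<rho>" "\<rho> < 1" and \<alpha>: "0 < \<alpha>"
    and \<theta>: "\<theta> \<in> {0..pi/2}" "theta_lhs \<theta> = pi * (1 + \<rho> / \<alpha> - \<rho>) / (2 * (1 - \<rho>))"
    and "\<Lambda> \<noteq> 2 * sin \<theta>"
  shows "M_risk (2 * sin \<theta>) \<rho> \<rho> \<alpha> < M_risk \<Lambda> \<rho> \<rho> \<alpha>"
proof -
  define c where "c = \<alpha> * (1 - \<rho>)"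
  have "0 < c"
    using \<rho> \<alpha> by (simp add: c_def)
  have eq: "theta_lhs \<theta> = pi/2 + pi * \<rho> / (2 * c)"
    using \<theta>(2) theta_rhs_eq[OF \<alpha> \<rho>(2)] by (simp add: c_def)
  moreover have "pi/2 < pi/2 + pi * \<rho> / (2 * c)"
    using \<rho> \<open>0 < c\<close> by simp
  ultimately have "0 < \<theta>" "\<theta> < pi/2"
    using theta_lhs_solution_interior[OF \<theta>(1)] by auto
  then have "0 < sin \<theta>" "sin \<theta> < 1"
    using sin_mono_less_eq[of \<theta> "pi/2"] by (auto intro: sin_gt_zero)
  then have "risk_profile \<rho> c (2 * sin \<theta>) < risk_profile \<rho> c \<Lambda>"
    using risk_profile_strict_min risk_slope_two_sin[OF \<open>0 < c\<close> \<open>0 < \<theta>\<close> \<open>\<theta> < pi/2\<close> eq]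
      \<rho> \<open>0 < c\<close> assms(6) by simp
  then show ?thesis
    using \<rho> by (simp add: M_risk_square_eq c_def)
qed

theorem theorem5:
  fixes \<rho> \<alpha> :: real
  assumes "0 < \<rho>" and "\<rho> < 1" and "\<alpha> \<in> {1/2, 1}"
  shows
    "(\<forall>\<Lambda>\<in>{0..2}. M_risk \<Lambda> \<rho> \<rho> \<alpha> =
        \<rho> * (2 - \<rho>) + (1 - \<rho>) * (\<rho> * \<Lambda>\<^sup>2 + \<alpha> * (1 - \<rho>) *
          (Q2 \<Lambda> - 2 * \<Lambda> * Q1 \<Lambda> + \<Lambda>\<^sup>2 * Q0 \<Lambda>)))
   \<and> (\<forall>x\<in>{0..<2}. Q0 x = 1 - x / (2 * pi) * sqrt (4 - x\<^sup>2)
                          - 2 / pi * arctan (x / sqrt (4 - x\<^sup>2)))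
   \<and> (\<forall>x\<in>{0..2}. Q1 x = 1 / (3 * pi) * (4 - x\<^sup>2) powr (3/2))
   \<and> (\<forall>x\<in>{0..2}. Q2 x = 1 - 1 / (4 * pi) * x * sqrt (4 - x\<^sup>2) * (x\<^sup>2 - 2)
                          - 2 / pi * arcsin (x / 2))
   \<and> (\<exists>!\<theta>. \<theta> \<in> {0..pi/2} \<and>
        \<theta> + cot \<theta> * (1 - cos \<theta> ^ 2 / 3) = pi * (1 + \<rho> / \<alpha> - \<rho>) / (2 * (1 - \<rho>)))
   \<and> (\<forall>\<theta>. \<theta> \<in> {0..pi/2} \<and>
        \<theta> + cot \<theta> * (1 - cos \<theta> ^ 2 / 3) = pi * (1 + \<rho> / \<alpha> - \<rho>) / (2 * (1 - \<rho>))
        \<longrightarrow> (\<forall>\<Lambda>. M_risk (2 * sin \<theta>) \<rho> \<rho> \<alpha> \<le> M_risk \<Lambda> \<rho> \<rho> \<alpha>)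
          \<and> (\<forall>\<Lambda>. M_risk \<Lambda> \<rho> \<rho> \<alpha> = M_risk (2 * sin \<theta>) \<rho> \<rho> \<alpha> \<longrightarrow> \<Lambda> = 2 * sin \<theta>))
   \<and> strict_antimono_on {0<..pi/2} (\<lambda>\<theta>. \<theta> + cot \<theta> * (1 - cos \<theta> ^ 2 / 3))"
proof -
  have \<alpha>: "0 < \<alpha>"
    using assms(3) by auto
  have "pi/2 < pi * (1 + \<rho> / \<alpha> - \<rho>) / (2 * (1 - \<rho>))"
    using theta_rhs_eq[OF \<alpha> assms(2)] assms \<alpha> by simp
  note unique = theta_lhs_unique_solution[OF this]
  note strict_min = M_risk_square_strict_min[OF assms(1,2) \<alpha>]
  show ?thesis
    unfolding theta_lhs_def[symmetric]
    apply (intro conjI)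
    subgoal using M_risk_square_eq[OF assms(1,2)] by (simp add: risk_profile_def)
    subgoal using Q0_arctan by simp
    subgoal using Q1_closed_form by simp
    subgoal using Q2_closed_form by simp
    subgoal using unique .
    subgoal using strict_min by (intro allI impI conjI; elim conjE) (metis order_le_less order_less_irrefl)+
    subgoal using strict_antimono_on_theta_lhs .
    done
qed

end
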